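(* Suppose Assumptions (A1), (A2), (A3) hold and $a<1/U_L$. Let $\Gamma\ge0$, $\epsilon\in(0,1]$, and $\zeta_1(\epsilon):=\ln\frac{3(\sigma_L+\mathcal C_\mu)peR}{\epsilon}$. Suppose $\hat\beta$, with $\|\hat\beta\|_\infty\le R$, satisfies S$^3$ONC$(\mathbf Z_1^n)$ almost surely and $\mathcal L_{n,\lambda}(\hat\beta,\mathbf Z_1^n)\le\mathcal L_{n,\lambda}(\beta^*_{\hat\varepsilon},\mathbf Z_1^n)+\Gamma$ with probability one. Let $\tilde p_u>s$ be an integer such that, for every integer $\hat p$ with $\tilde p_u\le\hat p\le p$, $$(\hat p-s)P_\lambda(a\lambda)>\frac{4\sigma}{cn}\zeta_1(\epsilon)\hat p+\frac{2\sigma}{\sqrt n}\sqrt{\frac{2\hat p}{c}\zeta_1(\epsilon)}+\Gamma+2\epsilon+\hat\varepsilon.$$ Then, for some constant $\tilde c>0$, $$\mathbb P\big[\|\hat\beta\|_0\le\tilde p_u-1\big]\ge1-2p\,e^{-\tilde cn}-4\exp(-\tilde p_u\zeta_1(\epsilon)).$$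
   Context: Standing setup. Let $Z_1,\dots,Z_n$ be i.i.d. random samples with support $\mathcal W\subseteq\mathbb R^q$, and write $\mathbf Z_1^n=(Z_1,\dots,Z_n)$. Let $L:\mathbb R^p\times\mathcal W\to\mathbb R$ ($p>2$) be measurable and deterministic. Define $\mathcal L_n(\beta,\mathbf Z_1^n)=\frac1n\sum_iL(\beta,Z_i)$ and $\mathbb L(\beta)=\mathbb E[\mathcal L_n(\beta,\mathbf Z_1^n)]$. Let $\beta^*\in\arg\min_\beta\mathbb L(\beta)$ with $\|\beta^*\|_\infty\le R$, $R\ge1$. $L(\cdot,z)$ is continuously differentiable for a.e. $z$ with coordinatewise Lipschitz partial derivatives of constant $U_L\ge1$: $$|\partial_{\beta_j}\mathcal L_n(\tilde\beta+\delta e_j,z)-\partial_{\beta_j}\mathcal L_n(\tilde\beta,z)|\le U_L|\delta|.$$ Penalty. $P_\lambda(\theta)=\int_0^\theta\frac{[a\lambda-t]_+}{a}dt$ and $\mathcal L_{n,\lambda}(\beta,\mathbf Z_1^n)=\mathcal L_n(\beta,\mathbf Z_1^n)+\sum_jP_\lambda(|\beta_j|)$. $\|\cdot\|$ is the Euclidean norm and $\|\cdot\|_0$ counts nonzeros. (A1) (A-sparsity). There is $\beta^*_{\hat\varepsilon}$ with $\|\beta^*_{\hat\varepsilon}\|_\infty\le R$, $s:=\|\beta^*_{\hat\varepsilon}\|_0\ge1$ and $\mathbb L(\beta^*_{\hat\varepsilon})-\mathbb L(\beta^* )\le\hat\varepsilon$ ($\hat\varepsilon\ge0$). (A2). For every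 $\beta$, the variables $L(\beta,Z_i)-\mathbb EL(\beta,Z_i)$ are independent, sub-exponential, with $\psi_1$-norm $\le\sigma$ ($\sigma\ge1$). $c\in(0,0.5]$ is the absolute constant with $$\mathbb P(|\sum_ia_i\{L(\beta,Z_i)-\mathbb EL(\beta,Z_i)\}|>\sigma(\|\mathbf a\|\sqrt t+\|\mathbf a\|_\infty t))\le2e^{-ct}.$$ (A3). There is a measurable deterministic $\mathcal C:\mathcal W\to\mathbb R_+$ with $\|\mathcal C(Z_i)-\mathbb E\mathcal C(Z_i)\|_{\psi_1}\le\sigma_L$ ($\sigma_L\ge1$), $\mathbb E|\mathcal C(Z_i)|\le\mathcal C_\mu$ ($\mathcal C_\mu\ge1$), and $|L(\beta_1,z)-L(\beta_2,z)|\le\mathcal C(z)\|\beta_1-\beta_2\|$. S$^3$ONC$(\mathbf Z_1^n)$. It holds at $\hat\beta$ if both of the following hold. (a) There exist $g_j$, with $g_j=P'_\lambda(|\hat\beta_j|)\mathrm{sign}(\hat\beta_j)$ if $\hat\beta_j\ne0$ and $g_j\in[-\lambda,\lambda]$ if $\hat\beta_j=0$, with $\partial_{\beta_j}\mathcal L_n(\hat\beta,\mathbf Z_1^n)+g_j=0$ for all $j$. (b) For every $j$ with $|\hat\beta_j|\in(0,a\lambda)$, $U_L+P''_\lambda(|\hat\beta_j|)\ge0$. *)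

theory Defs
  imports "HOL-Probability.Probability"
begin

section \<open>Vectors of R^p represented as functions nat => real vanishing beyond index p\<close>

definition Rp :: "nat \<Rightarrow> (nat \<Rightarrow> real) set" where
  "Rp p = {\<beta>. \<forall>j\<ge>p. \<beta> j = 0}"

definition enorm :: "nat \<Rightarrow> (nat \<Rightarrow> real) \<Rightarrow> real" where
  "enorm p v = sqrt (\<Sum>j<p. (v j)\<^sup>2)"

definition supnorm :: "nat \<Rightarrow> (nat \<Rightarrow> real) \<Rightarrow> real" where
  "supnorm p v = Max (insert 0 ((\<lambda>j. \<bar>v j\<bar>) ` {..<p}))"

definition nnz :: "nat \<Rightarrow> (nat \<Rightarrow> real) \<Rightarrow> nat" where
  "nnz p v = card {j. j < p \<and> v j \<noteq> 0}"

definition unitv :: "nat \<Rightarrow> nat \<Rightarrow> real" where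
  "unitv j = (\<lambda>k. if k = j then 1 else 0)"

definition grad_at :: "nat \<Rightarrow> ((nat \<Rightarrow> real) \<Rightarrow> real) \<Rightarrow> (nat \<Rightarrow> real) \<Rightarrow> (nat \<Rightarrow> real) \<Rightarrow> bool" where
  "grad_at p f \<beta> g \<longleftrightarrow>
     (\<forall>e>0. \<exists>d>0. \<forall>h\<in>Rp p. enorm p h < d \<longrightarrow>
        \<bar>f (\<lambda>k. \<beta> k + h k) - f \<beta> - (\<Sum>j<p. g j * h j)\<bar> \<le> e * enorm p h)"

definition cont_diff_grad :: "nat \<Rightarrow> ((nat \<Rightarrow> real) \<Rightarrow> real) \<Rightarrow> ((nat \<Rightarrow> real) \<Rightarrow> (nat \<Rightarrow> real)) \<Rightarrow> bool" where
  "cont_diff_grad p f G \<longleftrightarrow>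
     (\<forall>\<beta>\<in>Rp p. G \<beta> \<in> Rp p \<and> grad_at p f \<beta> (G \<beta>)) \<and>
     (\<forall>\<beta>\<in>Rp p. \<forall>e>0. \<exists>d>0. \<forall>\<beta>'\<in>Rp p.
        enorm p (\<lambda>k. \<beta>' k - \<beta> k) < d \<longrightarrow> enorm p (\<lambda>k. G \<beta>' k - G \<beta> k) < e)"

definition smooth_coord_lipschitz :: "nat \<Rightarrow> real \<Rightarrow> ((nat \<Rightarrow> real) \<Rightarrow> real) \<Rightarrow> bool" where
  "smooth_coord_lipschitz p UL f \<longleftrightarrow>
     (\<exists>G. cont_diff_grad p f G \<and>
        (\<forall>\<beta>\<in>Rp p. \<forall>j<p. \<forall>\<delta>::real.
           \<bar>G (\<lambda>k. \<beta> k + \<delta> * unitv j k) j - G \<beta> j\<bar> \<le> UL * \<bar>\<delta>\<bar>))"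

definition Ppen :: "real \<Rightarrow> real \<Rightarrow> real \<Rightarrow> real" where
  "Ppen lam a \<theta> = integral {0..\<theta>} (\<lambda>t. max (a * lam - t) 0 / a)"

definition Ln :: "nat \<Rightarrow> ((nat \<Rightarrow> real) \<Rightarrow> 'z \<Rightarrow> real) \<Rightarrow> (nat \<Rightarrow> 'a \<Rightarrow> 'z) \<Rightarrow> (nat \<Rightarrow> real) \<Rightarrow> 'a \<Rightarrow> real" where
  "Ln n L Z \<beta> \<omega> = (\<Sum>i<n. L \<beta> (Z i \<omega>)) / real n"

definition Lnlam :: "nat \<Rightarrow> nat \<Rightarrow> real \<Rightarrow> real \<Rightarrow> ((nat \<Rightarrow> real) \<Rightarrow> 'z \<Rightarrow> real) \<Rightarrow> (nat \<Rightarrow> 'a \<Rightarrow> 'z) \<Rightarrow> (nat \<Rightarrow> real) \<Rightarrow> 'a \<Rightarrow> real" where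
  "Lnlam p n lam a L Z \<beta> \<omega> = Ln n L Z \<beta> \<omega> + (\<Sum>j<p. Ppen lam a \<bar>\<beta> j\<bar>)"

definition popL :: "'a measure \<Rightarrow> nat \<Rightarrow> ((nat \<Rightarrow> real) \<Rightarrow> 'z \<Rightarrow> real) \<Rightarrow> (nat \<Rightarrow> 'a \<Rightarrow> 'z) \<Rightarrow> (nat \<Rightarrow> real) \<Rightarrow> real" where
  "popL M n L Z \<beta> = integral\<^sup>L M (Ln n L Z \<beta>)"

definition S3ONC :: "nat \<Rightarrow> real \<Rightarrow> real \<Rightarrow> real \<Rightarrow> ((nat \<Rightarrow> real) \<Rightarrow> real) \<Rightarrow> (nat \<Rightarrow> real) \<Rightarrow> bool" where
  "S3ONC p lam a UL f \<beta> \<longleftrightarrow>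
     (\<forall>j<p. \<exists>d g. ((\<lambda>t. f (\<lambda>k. \<beta> k + t * unitv j k)) has_real_derivative d) (at 0) \<and>
        (if \<beta> j \<noteq> 0 then g = deriv (Ppen lam a) \<bar>\<beta> j\<bar> * sgn (\<beta> j) else g \<in> {-lam..lam}) \<and>
        d + g = 0) \<and>
     (\<forall>j<p. \<bar>\<beta> j\<bar> \<in> {0<..<a * lam} \<longrightarrow> UL + deriv (deriv (Ppen lam a)) \<bar>\<beta> j\<bar> \<ge> 0)"

definition psi1_set :: "'a measure \<Rightarrow> ('a \<Rightarrow> real) \<Rightarrow> real set" where
  "psi1_set M X = {t. 0 < t \<and> (\<integral>\<^sup>+\<omega>. ennreal (exp (\<bar>X \<omega>\<bar> / t)) \<partial>M) \<le> 2}"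

definition sub_exponential :: "'a measure \<Rightarrow> ('a \<Rightarrow> real) \<Rightarrow> bool" where
  "sub_exponential M X \<longleftrightarrow> psi1_set M X \<noteq> {}"

definition psi1_norm :: "'a measure \<Rightarrow> ('a \<Rightarrow> real) \<Rightarrow> real" where
  "psi1_norm M X = Inf (psi1_set M X)"

text \<open>c is a (valid) absolute constant in Bernstein's inequality for weighted sums of
  independent centered sub-exponential random variables on M.\<close>
definition bernstein_constant :: "'a measure \<Rightarrow> real \<Rightarrow> bool" where
  "bernstein_constant M c \<longleftrightarrow>
     (\<forall>(X::nat \<Rightarrow> 'a \<Rightarrow> real) (m::nat) (K::real) (w::nat \<Rightarrow> real) (t::real).
        (\<forall>i<m. X i \<in> borel_measurable M \<and> integrable M (X i) \<and> integral\<^sup>L M (X i) = 0 \<and>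
               sub_exponential M (X i) \<and> psi1_norm M (X i) \<le> K) \<and>
        prob_space.indep_vars M (\<lambda>_. borel) X {..<m} \<and> 0 \<le> t \<longrightarrow>
        measure M {\<omega>\<in>space M. \<bar>\<Sum>i<m. w i * X i \<omega>\<bar> >
            K * (sqrt (\<Sum>i<m. (w i)\<^sup>2) * sqrt t + Max (insert 0 ((\<lambda>i. \<bar>w i\<bar>) ` {..<m})) * t)}
          \<le> 2 * exp (- c * t))"

end

theory Submission
  imports Defs
begin

(* At an S3ONC point the penalty has curvature -1/a < -UL on (0, a lam), so every nonzero
   coordinate of the estimator has modulus at least a lam and contributes exactly
   Ppen lam a (a lam); the penalty of beta_eps is at most s times that.  If the estimator had
   k >= pu nonzeros, the bound on the penalized objective would give
   (k - s) Ppen lam a (a lam) <= Ln(beta_eps) - Ln(beta_hat) + Gamma.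
   Approximate beta_hat within eps/(C_mu + sigma_L) by a point of a finite grid of k-sparse
   vectors; by the Lipschitz property (with the Bernstein-controlled mean of C(Z_i)) this costs
   eps in Ln.  Bernstein's inequality plus a union bound over the net, whose cardinality is at
   most exp(k zeta)/2, makes Ln and the population loss agree up to the deviation term at all
   net points and at beta_eps simultaneously; as beta_star minimizes the population loss,
   the choice of pu is contradicted.  Since exp zeta >= 12, the union bound over the levels
   k = pu..p is a geometric series. *)

section \<open>The penalty\<close>

lemma Ppen_integrand_has_integral:
  fixes a lam \<theta> :: real
  assumes a: "0 < a" and \<theta>: "0 \<le> \<theta>" "\<theta> \<le> a * lam"
  shows "((\<lambda>t. max (a * lam - t) 0 / a) has_integral (lam * \<theta> - \<theta>\<^sup>2 / (2 * a))) {0..\<theta>}"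
proof -
  have "((\<lambda>t. max (a * lam - t) 0 / a) has_integral
         (lam * \<theta> - \<theta>\<^sup>2 / (2 * a)) - (lam * 0 - 0\<^sup>2 / (2 * a))) {0..\<theta>}"
  proof (rule fundamental_theorem_of_calculus)
    fix x assume x: "x \<in> {0..\<theta>}"
    have "((\<lambda>t. lam * t - t\<^sup>2 / (2 * a)) has_real_derivative (lam - x / a)) (at x within {0..\<theta>})"
      using a by (auto intro!: derivative_eq_intros simp: field_simps)
    moreover have "lam - x / a = max (a * lam - x) 0 / a"
      using a x \<theta> by (auto simp: field_simps max_def)
    ultimately show "((\<lambda>t. lam * t - t\<^sup>2 / (2 * a)) has_vector_derivative max (a * lam - x) 0 / a)
        (at x within {0..\<theta>})"
      by (simp add: has_real_derivative_iff_has_vector_derivative)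
  qed (use \<theta> in simp)
  then show ?thesis by simp
qed

lemma Ppen_quadratic:
  fixes a lam \<theta> :: real
  assumes "0 < a" "0 \<le> \<theta>" "\<theta> \<le> a * lam"
  shows "Ppen lam a \<theta> = lam * \<theta> - \<theta>\<^sup>2 / (2 * a)"
  unfolding Ppen_def using Ppen_integrand_has_integral[OF assms] by (rule integral_unique)

lemma Ppen_0: "0 < a \<Longrightarrow> 0 \<le> lam \<Longrightarrow> Ppen lam a 0 = 0"
  using Ppen_quadratic[of a 0 lam] by simp

lemma Ppen_constant:
  assumes a: "0 < a" and lam: "0 \<le> lam" and \<theta>: "a * lam \<le> \<theta>"
  shows "Ppen lam a \<theta> = a * lam\<^sup>2 / 2"
proof -
  have "((\<lambda>t. max (a * lam - t) 0 / a) has_integral (lam * (a * lam) - (a * lam)\<^sup>2 / (2 * a)))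
      {0..a * lam}"
    using a lam by (intro Ppen_integrand_has_integral) auto
  moreover have "lam * (a * lam) - (a * lam)\<^sup>2 / (2 * a) = a * lam\<^sup>2 / 2"
    using a by (simp add: field_simps power2_eq_square)
  moreover have "((\<lambda>t. max (a * lam - t) 0 / a) has_integral 0) {a * lam..\<theta>}"
    by (rule has_integral_is_0) (auto simp: max_def)
  ultimately have "((\<lambda>t. max (a * lam - t) 0 / a) has_integral (a * lam\<^sup>2 / 2 + 0)) {0..\<theta>}"
    using a lam \<theta> by (intro has_integral_combine) auto
  then show ?thesis
    unfolding Ppen_def by (simp only: add_0_right integral_unique)
qed

lemma Ppen_le_Ppen_a_lam:
  assumes a: "0 < a" and lam: "0 \<le> lam" and \<theta>: "0 \<le> \<theta>"
  shows "Ppen lam a \<theta> \<le> Ppen lam a (a * lam)"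
proof (cases "\<theta> \<le> a * lam")
  case True
  have "a * lam\<^sup>2 / 2 - (lam * \<theta> - \<theta>\<^sup>2 / (2 * a)) = (a * lam - \<theta>)\<^sup>2 / (2 * a)"
    using a by (simp add: field_simps power2_eq_square)
  moreover have "0 \<le> (a * lam - \<theta>)\<^sup>2 / (2 * a)" using a by simp
  ultimately show ?thesis
    using Ppen_quadratic[OF a \<theta> True] Ppen_constant[OF a lam order_refl] by simp
qed (use Ppen_constant[OF a lam, of \<theta>] Ppen_constant[OF a lam order_refl] in auto)

lemma deriv2_Ppen:
  assumes a: "0 < a" and x: "0 < x" "x < a * lam"
  shows "deriv (deriv (Ppen lam a)) x = - 1 / a"
proof -
  have near: "\<forall>\<^sub>F z in nhds y. z \<in> {0<..<a * lam}" if "y \<in> {0<..<a * lam}" for y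
    using that by (intro eventually_nhds_in_open) auto
  have deriv1: "deriv (Ppen lam a) y = lam - y / a" if y: "y \<in> {0<..<a * lam}" for y
  proof -
    have "\<forall>\<^sub>F z in nhds y. Ppen lam a z = lam * z - z\<^sup>2 / (2 * a)"
      using near[OF y] by (rule eventually_mono) (use Ppen_quadratic[OF a] in auto)
    then have "deriv (Ppen lam a) y = deriv (\<lambda>z. lam * z - z\<^sup>2 / (2 * a)) y"
      by (rule deriv_cong_ev) simp
    also have "\<dots> = lam - y / a"
      using a by (intro DERIV_imp_deriv) (auto intro!: derivative_eq_intros simp: field_simps)
    finally show ?thesis .
  qed
  have "\<forall>\<^sub>F z in nhds x. z \<in> {0<..<a * lam}"
    using x by (intro near) auto
  then have "\<forall>\<^sub>F z in nhds x. deriv (Ppen lam a) z = lam - z / a"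
    by (rule eventually_mono) (rule deriv1)
  then have "deriv (deriv (Ppen lam a)) x = deriv (\<lambda>z. lam - z / a) x"
    by (rule deriv_cong_ev) simp
  also have "\<dots> = - 1 / a"
    using a by (intro DERIV_imp_deriv) (auto intro!: derivative_eq_intros)
  finally show ?thesis .
qed

lemma S3ONC_nonzero_ge:
  assumes S: "S3ONC p lam a UL f \<beta>" and a: "0 < a" and aUL: "a < 1 / UL" and UL: "0 < UL"
    and j: "j < p" and nz: "\<beta> j \<noteq> 0"
  shows "a * lam \<le> \<bar>\<beta> j\<bar>"
proof (rule ccontr)
  assume "\<not> a * lam \<le> \<bar>\<beta> j\<bar>"
  with nz have small: "\<bar>\<beta> j\<bar> \<in> {0<..<a * lam}" by auto
  with S j have "0 \<le> UL + deriv (deriv (Ppen lam a)) \<bar>\<beta> j\<bar>"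
    unfolding S3ONC_def by blast
  also have "deriv (deriv (Ppen lam a)) \<bar>\<beta> j\<bar> = - 1 / a"
    using small by (intro deriv2_Ppen[OF a]) auto
  finally have "1 \<le> a * UL" using a by (simp add: field_simps)
  with aUL UL show False by (simp add: field_simps)
qed

lemma sum_if_nonzero_eq_nnz: "(\<Sum>j<p. if \<beta> j \<noteq> 0 then x else 0) = real (nnz p \<beta>) * x"
proof -
  have "(\<Sum>j<p. if \<beta> j \<noteq> 0 then x else 0) = (\<Sum>j\<in>{j\<in>{..<p}. \<beta> j \<noteq> 0}. x)"
    by (rule sum.inter_filter[symmetric]) simp
  also have "{j\<in>{..<p}. \<beta> j \<noteq> 0} = {j. j < p \<and> \<beta> j \<noteq> 0}" by auto
  finally show ?thesis unfolding nnz_def by simp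
qed

lemma sum_Ppen_le_nnz:
  assumes "0 < a" "0 \<le> lam"
  shows "(\<Sum>j<p. Ppen lam a \<bar>\<beta> j\<bar>) \<le> real (nnz p \<beta>) * Ppen lam a (a * lam)"
proof -
  have "(\<Sum>j<p. Ppen lam a \<bar>\<beta> j\<bar>) \<le> (\<Sum>j<p. if \<beta> j \<noteq> 0 then Ppen lam a (a * lam) else 0)"
    using assms by (intro sum_mono) (simp add: Ppen_0 Ppen_le_Ppen_a_lam)
  then show ?thesis by (simp only: sum_if_nonzero_eq_nnz)
qed

lemma sum_Ppen_S3ONC:
  assumes "S3ONC p lam a UL f \<beta>" "0 < a" "0 \<le> lam" "a < 1 / UL" "0 < UL"
  shows "(\<Sum>j<p. Ppen lam a \<bar>\<beta> j\<bar>) = real (nnz p \<beta>) * Ppen lam a (a * lam)"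
proof -
  have "Ppen lam a \<bar>\<beta> j\<bar> = Ppen lam a (a * lam)" if "j < p" "\<beta> j \<noteq> 0" for j
    using S3ONC_nonzero_ge[OF assms(1,2,4,5) that] assms(2,3) by (simp add: Ppen_constant)
  then have "(\<Sum>j<p. Ppen lam a \<bar>\<beta> j\<bar>) = (\<Sum>j<p. if \<beta> j \<noteq> 0 then Ppen lam a (a * lam) else 0)"
    using assms(2,3) by (intro sum.cong) (auto simp: Ppen_0)
  then show ?thesis by (simp only: sum_if_nonzero_eq_nnz)
qed

lemma Ln_penalty_gap_S3ONC:
  assumes "S3ONC p lam a UL (\<lambda>b. Ln n L Z b \<omega>) \<beta>"
    and "Lnlam p n lam a L Z \<beta> \<omega> \<le> Lnlam p n lam a L Z \<beta>' \<omega> + \<Gamma>"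
    and "0 < a" "0 \<le> lam" "a < 1 / UL" "0 < UL"
  shows "Ln n L Z \<beta> \<omega> + real (nnz p \<beta>) * Ppen lam a (a * lam)
           \<le> Ln n L Z \<beta>' \<omega> + real (nnz p \<beta>') * Ppen lam a (a * lam) + \<Gamma>"
  using assms sum_Ppen_S3ONC[OF assms(1,3-6)] sum_Ppen_le_nnz[OF assms(3,4), where p=p and \<beta>=\<beta>']
  unfolding Lnlam_def by linarith

lemma nnz_le: "nnz p \<beta> \<le> p"
  unfolding nnz_def using card_mono[of "{..<p}" "{j. j < p \<and> \<beta> j \<noteq> 0}"] by auto

lemma borel_measurable_nnz:
  assumes "\<And>j. j < p \<Longrightarrow> (\<lambda>\<omega>. \<beta> \<omega> j) \<in> borel_measurable M"
  shows "(\<lambda>\<omega>. real (nnz p (\<beta> \<omega>))) \<in> borel_measurable M"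
proof -
  have "(\<lambda>\<omega>. if \<beta> \<omega> j \<noteq> 0 then 1 else 0 :: real) \<in> borel_measurable M" if "j < p" for j
    using assms[OF that] by measurable
  then have "(\<lambda>\<omega>. \<Sum>j<p. if \<beta> \<omega> j \<noteq> 0 then 1 else 0 :: real) \<in> borel_measurable M"
    by (intro borel_measurable_sum) auto
  then show ?thesis by (simp add: sum_if_nonzero_eq_nnz)
qed

section \<open>Sparse nets\<close>

lemma pow_div_fact_le_exp:
  fixes x :: real assumes "0 \<le> x"
  shows "x ^ k / fact k \<le> exp x"
proof -
  obtain t where "exp x = (\<Sum>m<Suc k. x ^ m / fact m) + exp t / fact (Suc k) * x ^ Suc k"
    using Maclaurin_exp_le[of x "Suc k"] by blast
  moreover have "x ^ k / fact k \<le> (\<Sum>m<Suc k. x ^ m / fact m)"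
    using assms by (intro member_le_sum) auto
  moreover have "0 \<le> exp t / fact (Suc k) * x ^ Suc k" using assms by simp
  ultimately show ?thesis by linarith
qed

lemma binomial_le_pow_div_fact: "real (p choose k) \<le> real p ^ k / fact k"
proof -
  have "real ((p choose k) * fact k) \<le> real (p ^ k)"
    using binomial_fact_pow by (simp only: of_nat_le_iff)
  then show ?thesis by (simp add: field_simps)
qed

lemma sum_power_le_twice_first:
  fixes q :: real assumes "0 \<le> q" "q \<le> 1/2"
  shows "(\<Sum>k=m..n. q ^ k) \<le> 2 * q ^ m"
proof (cases "n < m")
  case False
  have "(\<Sum>k=m..n. q ^ k) = (q ^ m - q ^ Suc n) / (1 - q)"
    using False assms by (simp add: sum_gp)
  also have "\<dots> \<le> q ^ m / (1 - q)"
    using assms by (intro divide_right_mono) auto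
  also have "\<dots> \<le> q ^ m / (1/2)"
    using assms by (intro divide_left_mono) auto
  finally show ?thesis by simp
qed (use assms in simp)

definition grid :: "real \<Rightarrow> real \<Rightarrow> real set" where
  "grid R h = (\<lambda>i. - R + real i * h) ` {0..nat \<lceil>2 * R / h\<rceil>}"

definition sparse_net :: "nat \<Rightarrow> nat \<Rightarrow> real \<Rightarrow> real \<Rightarrow> (nat \<Rightarrow> real) set" where
  "sparse_net p k R h = (\<Union>S\<in>{S. S \<subseteq> {..<p} \<and> card S = k}.
      (\<lambda>f j. if j \<in> S then f j else 0) ` PiE S (\<lambda>_. grid R h))"

lemma finite_grid: "finite (grid R h)"
  unfolding grid_def by simp

lemma card_grid_le: "card (grid R h) \<le> nat \<lceil>2 * R / h\<rceil> + 1"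
  unfolding grid_def using card_image_le[of "{0..nat \<lceil>2 * R / h\<rceil>}"] by simp

lemma grid_approx:
  assumes h: "0 < h" and v: "\<bar>v\<bar> \<le> R"
  shows "\<exists>g\<in>grid R h. \<bar>v - g\<bar> \<le> h"
proof -
  define i where "i = nat \<lfloor>(v + R) / h\<rfloor>"
  have "0 \<le> (v + R) / h" using v h by auto
  then have i: "real i \<le> (v + R) / h" "(v + R) / h < real i + 1"
    unfolding i_def by linarith+
  have "(v + R) / h \<le> 2 * R / h" using v h by (simp add: divide_right_mono)
  then have "i \<le> nat \<lceil>2 * R / h\<rceil>"
    unfolding i_def by (meson ceiling_mono floor_le_ceiling nat_mono order.trans)
  moreover have "\<bar>v - (- R + real i * h)\<bar> \<le> h"
    using i h by (simp add: field_simps abs_if)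
  ultimately show ?thesis unfolding grid_def by auto
qed

lemma sparse_net_subset_Rp: "sparse_net p k R h \<subseteq> Rp p"
  unfolding sparse_net_def Rp_def by auto

lemma finite_sparse_net: "finite (sparse_net p k R h)"
proof -
  have "finite {S. S \<subseteq> {..<p} \<and> card S = k}" by (rule finite_subset[of _ "Pow {..<p}"]) auto
  moreover have "finite ((\<lambda>f j. if j \<in> S then f j else 0) ` PiE S (\<lambda>_. grid R h))"
    if "S \<subseteq> {..<p}" for S
    using that by (intro finite_imageI finite_PiE finite_grid) (auto intro: finite_subset)
  ultimately show ?thesis
    unfolding sparse_net_def by (intro finite_UN_I) auto
qed

lemma card_sparse_net_le:
  "card (sparse_net p k R h) \<le> (p choose k) * (nat \<lceil>2 * R / h\<rceil> + 1) ^ k"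
proof -
  let ?SS = "{S. S \<subseteq> {..<p} \<and> card S = k}"
  let ?F = "\<lambda>S. (\<lambda>f j. if j \<in> S then f j else (0::real)) ` PiE S (\<lambda>_. grid R h)"
  have card_F: "card (?F S) \<le> (nat \<lceil>2 * R / h\<rceil> + 1) ^ k" if "S \<in> ?SS" for S
  proof -
    have "finite S" using that by (auto intro: finite_subset)
    then have "card (?F S) \<le> card (PiE S (\<lambda>_. grid R h))"
      by (intro card_image_le finite_PiE finite_grid)
    also have "\<dots> = card (grid R h) ^ card S" using \<open>finite S\<close> by (simp add: card_PiE)
    also have "\<dots> \<le> (nat \<lceil>2 * R / h\<rceil> + 1) ^ k"
      using that card_grid_le by (simp add: power_mono)
    finally show ?thesis .
  qed
  have "finite ?SS" by (rule finite_subset[of _ "Pow {..<p}"]) auto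
  then have "card (sparse_net p k R h) \<le> (\<Sum>S\<in>?SS. card (?F S))"
    unfolding sparse_net_def by (rule card_UN_le)
  also have "\<dots> \<le> (\<Sum>S\<in>?SS. (nat \<lceil>2 * R / h\<rceil> + 1) ^ k)"
    using card_F by (rule sum_mono)
  also have "\<dots> = card ?SS * (nat \<lceil>2 * R / h\<rceil> + 1) ^ k" by simp
  also have "card ?SS = p choose k" using n_subsets[of "{..<p}" k] by simp
  finally show ?thesis .
qed

lemma abs_le_supnorm: "j < p \<Longrightarrow> \<bar>v j\<bar> \<le> supnorm p v"
  unfolding supnorm_def by (rule Max_ge) auto

lemma sparse_net_approx:
  assumes h: "0 < h" and \<beta>: "\<beta> \<in> Rp p" "supnorm p \<beta> \<le> R"
  shows "\<exists>\<beta>'\<in>sparse_net p (nnz p \<beta>) R h.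
           enorm p (\<lambda>j. \<beta> j - \<beta>' j) \<le> sqrt (real (nnz p \<beta>)) * h"
proof -
  define S where "S = {j. j < p \<and> \<beta> j \<noteq> 0}"
  have "\<exists>g\<in>grid R h. \<bar>\<beta> j - g\<bar> \<le> h" if "j \<in> S" for j
    using that \<beta>(2) abs_le_supnorm[of j p \<beta>] unfolding S_def by (intro grid_approx h) auto
  then obtain g where g: "\<And>j. j \<in> S \<Longrightarrow> g j \<in> grid R h \<and> \<bar>\<beta> j - g j\<bar> \<le> h" by metis
  define \<beta>' where "\<beta>' = (\<lambda>j. if j \<in> S then restrict g S j else 0)"
  have "restrict g S \<in> PiE S (\<lambda>_. grid R h)" using g by auto
  then have "\<beta>' \<in> sparse_net p (nnz p \<beta>) R h"
    unfolding sparse_net_def \<beta>'_def nnz_def S_def by blast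
  moreover have "(\<Sum>j<p. (\<beta> j - \<beta>' j)\<^sup>2) = (\<Sum>j\<in>S. (\<beta> j - \<beta>' j)\<^sup>2)"
    by (rule sum.mono_neutral_right) (auto simp: S_def \<beta>'_def)
  moreover have "(\<Sum>j\<in>S. (\<beta> j - \<beta>' j)\<^sup>2) \<le> (\<Sum>j\<in>S. h\<^sup>2)"
    using g h by (intro sum_mono) (auto simp: \<beta>'_def abs_le_square_iff[symmetric])
  moreover have "(\<Sum>j\<in>S. h\<^sup>2) = (sqrt (real (nnz p \<beta>)) * h)\<^sup>2"
    by (simp add: S_def nnz_def power_mult_distrib)
  ultimately have "(\<Sum>j<p. (\<beta> j - \<beta>' j)\<^sup>2) \<le> (sqrt (real (nnz p \<beta>)) * h)\<^sup>2"
    by simp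
  then have "enorm p (\<lambda>j. \<beta> j - \<beta>' j) \<le> sqrt (real (nnz p \<beta>)) * h"
    unfolding enorm_def using h by (intro real_le_lsqrt) auto
  with \<open>\<beta>' \<in> sparse_net p (nnz p \<beta>) R h\<close> show ?thesis by blast
qed

text \<open>The grid has at most \<open>2xk\<close> points per coordinate, and \<open>p choose k * k ^ k \<le> (e p) ^ k\<close>.\<close>
lemma card_sparse_net_le_exp:
  fixes x h R :: real
  assumes k: "2 \<le> k" and x: "2 \<le> x" and Rh: "R / h \<le> x * sqrt (real k)"
  shows "real (card (sparse_net p k R h)) \<le> (2 * exp 1 * real p * x) ^ k"
proof -
  have "2 * real k \<le> real k * real k" using k by (intro mult_right_mono) auto
  then have "real k \<le> (real k - 1/2)\<^sup>2" by (simp add: power2_eq_square algebra_simps)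
  then have "sqrt (real k) \<le> real k - 1/2"
    using k by (intro real_le_lsqrt) auto
  then have "2 * 2 * (1/2) \<le> 2 * x * (real k - sqrt (real k))"
    using x by (intro mult_mono) auto
  then have "2 * x * sqrt (real k) + 2 \<le> 2 * x * real k"
    by (simp add: algebra_simps)
  moreover have "real (nat \<lceil>2 * R / h\<rceil>) \<le> max 0 (2 * R / h) + 1" by linarith
  moreover have "0 \<le> x * sqrt (real k)" using x by simp
  ultimately have grid_size: "real (nat \<lceil>2 * R / h\<rceil> + 1) \<le> 2 * x * real k"
    using Rh by simp
  have "real (card (sparse_net p k R h)) \<le> real (p choose k) * real (nat \<lceil>2 * R / h\<rceil> + 1) ^ k"
    using card_sparse_net_le[of p k R h] by (metis of_nat_le_iff of_nat_mult of_nat_power)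
  also have "\<dots> \<le> (real p ^ k / fact k) * (2 * x * real k) ^ k"
    using binomial_le_pow_div_fact[of p k] grid_size by (intro mult_mono power_mono) auto
  also have "\<dots> = (2 * x * real p) ^ k * (real k ^ k / fact k)"
    by (simp add: power_mult_distrib)
  also have "\<dots> \<le> (2 * x * real p) ^ k * exp 1 ^ k"
    using pow_div_fact_le_exp[of "real k" k] x by (intro mult_left_mono) (auto simp: exp_of_nat_mult[symmetric])
  finally show ?thesis by (simp add: power_mult_distrib mult_ac)
qed

section \<open>Concentration of the empirical loss\<close>

definition centered_mean :: "'a measure \<Rightarrow> nat \<Rightarrow> (nat \<Rightarrow> 'a \<Rightarrow> 'b) \<Rightarrow> ('b \<Rightarrow> real) \<Rightarrow> 'a \<Rightarrow> real" where
  "centered_mean M n Z g \<omega> = (\<Sum>i<n. (1 / real n) * (g (Z i \<omega>) - (\<integral>\<omega>'. g (Z i \<omega>') \<partial>M)))"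

lemma borel_measurable_centered_mean:
  fixes Z :: "nat \<Rightarrow> 'a \<Rightarrow> 'b::topological_space"
  assumes "\<forall>i<n. Z i \<in> borel_measurable M" "g \<in> borel_measurable borel"
  shows "centered_mean M n Z g \<in> borel_measurable M"
proof -
  have "(\<lambda>\<omega>. g (Z i \<omega>)) \<in> borel_measurable M" if "i < n" for i
    using assms that by (intro measurable_compose[OF _ assms(2)]) auto
  then show ?thesis
    unfolding centered_mean_def by (intro borel_measurable_sum borel_measurable_times) auto
qed

lemma bernstein_centered_mean:
  fixes Z :: "nat \<Rightarrow> 'a \<Rightarrow> 'b::topological_space"
  assumes "prob_space M" and c: "bernstein_constant M c"
    and Z: "\<forall>i<n. Z i \<in> borel_measurable M" and indep: "prob_space.indep_vars M (\<lambda>_. borel) Z {..<n}"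
    and g: "g \<in> borel_measurable borel"
    and subexp: "\<forall>i<n. integrable M (\<lambda>\<omega>. g (Z i \<omega>)) \<and>
          sub_exponential M (\<lambda>\<omega>. g (Z i \<omega>) - integral\<^sup>L M (\<lambda>\<omega>'. g (Z i \<omega>'))) \<and>
          psi1_norm M (\<lambda>\<omega>. g (Z i \<omega>) - integral\<^sup>L M (\<lambda>\<omega>'. g (Z i \<omega>'))) \<le> K"
    and t: "0 \<le> t" and n: "0 < n"
  shows "measure M {\<omega>\<in>space M. \<bar>centered_mean M n Z g \<omega>\<bar> > K * (sqrt (1 / real n) * sqrt t + (1 / real n) * t)}
           \<le> 2 * exp (- c * t)"
proof -
  interpret prob_space M by fact
  define X where "X i \<omega> = g (Z i \<omega>) - (\<integral>\<omega>'. g (Z i \<omega>') \<partial>M)" for i \<omega>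
  have "X i \<in> borel_measurable M \<and> integrable M (X i) \<and> integral\<^sup>L M (X i) = 0 \<and>
      sub_exponential M (X i) \<and> psi1_norm M (X i) \<le> K" if "i < n" for i
    unfolding X_def using Z subexp that
    by (auto simp: prob_space intro!: borel_measurable_diff measurable_compose[OF _ g])
  moreover have "indep_vars (\<lambda>_. borel) X {..<n}"
    unfolding X_def
    by (rule indep_vars_compose2[OF indep, where Y="\<lambda>i z. g z - (\<integral>\<omega>'. g (Z i \<omega>') \<partial>M)"])
       (use g in measurable)
  ultimately have "measure M {\<omega>\<in>space M. \<bar>\<Sum>i<n. (1 / real n) * X i \<omega>\<bar> >
      K * (sqrt (\<Sum>i<n. (1 / real n)\<^sup>2) * sqrt t + Max (insert 0 ((\<lambda>i. \<bar>1 / real n\<bar>) ` {..<n})) * t)}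
      \<le> 2 * exp (- c * t)"
    using t by (intro c[unfolded bernstein_constant_def, rule_format]) auto
  moreover have "(\<Sum>i<n. (1 / real n)\<^sup>2) = 1 / real n"
    using n by (simp add: power2_eq_square)
  moreover have "(\<lambda>i. \<bar>1 / real n\<bar>) ` {..<n} = {1 / real n}"
    using n by auto
  ultimately show ?thesis unfolding centered_mean_def X_def by simp
qed

lemma Ln_minus_popL:
  assumes "prob_space M" "\<forall>i<n. integrable M (\<lambda>\<omega>. L \<beta> (Z i \<omega>))"
  shows "Ln n L Z \<beta> \<omega> - popL M n L Z \<beta> = centered_mean M n Z (L \<beta>) \<omega>"
proof -
  have "popL M n L Z \<beta> = (\<Sum>i<n. \<integral>\<omega>'. L \<beta> (Z i \<omega>') \<partial>M) / real n"
    unfolding popL_def Ln_def using assms(2) by (simp add: integral_sum)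
  then show ?thesis unfolding Ln_def centered_mean_def
    by (simp add: sum_distrib_left sum_subtractf right_diff_distrib sum_divide_distrib diff_divide_distrib)
qed

lemma Ln_lipschitz:
  assumes Lip: "\<forall>z\<in>W. \<forall>\<beta>1\<in>Rp p. \<forall>\<beta>2\<in>Rp p. \<bar>L \<beta>1 z - L \<beta>2 z\<bar> \<le> Cf z * enorm p (\<lambda>k. \<beta>1 k - \<beta>2 k)"
    and W: "\<forall>i<n. Z i \<omega> \<in> W" and \<beta>: "\<beta> \<in> Rp p" "\<beta>' \<in> Rp p"
  shows "\<bar>Ln n L Z \<beta> \<omega> - Ln n L Z \<beta>' \<omega>\<bar>
           \<le> (\<Sum>i<n. (1 / real n) * Cf (Z i \<omega>)) * enorm p (\<lambda>j. \<beta> j - \<beta>' j)"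
proof -
  have "\<bar>Ln n L Z \<beta> \<omega> - Ln n L Z \<beta>' \<omega>\<bar> = \<bar>\<Sum>i<n. (1 / real n) * (L \<beta> (Z i \<omega>) - L \<beta>' (Z i \<omega>))\<bar>"
    unfolding Ln_def by (simp add: sum_subtractf sum_divide_distrib diff_divide_distrib)
  also have "\<dots> \<le> (\<Sum>i<n. \<bar>(1 / real n) * (L \<beta> (Z i \<omega>) - L \<beta>' (Z i \<omega>))\<bar>)"
    by (rule sum_abs)
  also have "\<dots> \<le> (\<Sum>i<n. (1 / real n) * (Cf (Z i \<omega>) * enorm p (\<lambda>j. \<beta> j - \<beta>' j)))"
  proof (rule sum_mono)
    fix i assume "i \<in> {..<n}"
    then have "\<bar>L \<beta> (Z i \<omega>) - L \<beta>' (Z i \<omega>)\<bar> \<le> Cf (Z i \<omega>) * enorm p (\<lambda>j. \<beta> j - \<beta>' j)"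
      using Lip W \<beta> by blast
    then show "\<bar>(1 / real n) * (L \<beta> (Z i \<omega>) - L \<beta>' (Z i \<omega>))\<bar>
        \<le> (1 / real n) * (Cf (Z i \<omega>) * enorm p (\<lambda>j. \<beta> j - \<beta>' j))"
      by (simp add: abs_mult divide_right_mono)
  qed
  also have "\<dots> = (\<Sum>i<n. (1 / real n) * Cf (Z i \<omega>)) * enorm p (\<lambda>j. \<beta> j - \<beta>' j)"
    by (simp add: sum_distrib_right mult.assoc)
  finally show ?thesis .
qed

section \<open>Sparsity of S3ONC solutions\<close>

locale sparse_recovery = prob_space M
  for M :: "'a measure" and Z :: "nat \<Rightarrow> 'a \<Rightarrow> 'z::topological_space" and W :: "'z set"
    and L :: "(nat \<Rightarrow> real) \<Rightarrow> 'z \<Rightarrow> real" and Cf :: "'z \<Rightarrow> real"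
    and n p :: nat and \<sigma> \<sigma>L C\<mu> R UL a lam :: real and \<beta>star \<beta>eps :: "nat \<Rightarrow> real"
    and epshat \<Gamma> \<epsilon> :: real and \<beta>hat :: "'a \<Rightarrow> nat \<Rightarrow> real" and pu :: nat and c :: real +
  assumes c_pos: "0 < c" and bernstein: "bernstein_constant M c"
    and Z_measurable: "\<forall>i<n. Z i \<in> borel_measurable M"
    and Z_indep: "prob_space.indep_vars M (\<lambda>_. borel) Z {..<n}"
    and Z_in_W: "\<forall>i<n. AE \<omega> in M. Z i \<omega> \<in> W"
    and p_gt_2: "2 < p"
    and L_measurable: "\<forall>\<beta>\<in>Rp p. L \<beta> \<in> borel_measurable borel"
    and R_ge_1: "R \<ge> 1"
    and \<beta>star_min: "\<forall>\<beta>\<in>Rp p. popL M n L Z \<beta>star \<le> popL M n L Z \<beta>"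
    and UL_ge_1: "UL \<ge> 1" and a_pos: "0 < a" and lam_pos: "0 < lam" and a_UL: "a < 1 / UL"
    and \<beta>eps_Rp: "\<beta>eps \<in> Rp p" and \<beta>eps_nonzero: "nnz p \<beta>eps \<ge> 1"
    and \<beta>eps_excess: "popL M n L Z \<beta>eps - popL M n L Z \<beta>star \<le> epshat"
    and L_subexp: "\<forall>\<beta>\<in>Rp p. \<forall>i<n. integrable M (\<lambda>\<omega>. L \<beta> (Z i \<omega>)) \<and>
          sub_exponential M (\<lambda>\<omega>. L \<beta> (Z i \<omega>) - integral\<^sup>L M (\<lambda>\<omega>'. L \<beta> (Z i \<omega>'))) \<and>
          psi1_norm M (\<lambda>\<omega>. L \<beta> (Z i \<omega>) - integral\<^sup>L M (\<lambda>\<omega>'. L \<beta> (Z i \<omega>'))) \<le> \<sigma>"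
    and \<sigma>L_ge_1: "\<sigma>L \<ge> 1" and C\<mu>_ge_1: "C\<mu> \<ge> 1"
    and Cf_measurable: "Cf \<in> borel_measurable borel" and Cf_nonneg: "\<forall>z\<in>W. 0 \<le> Cf z"
    and Cf_subexp: "\<forall>i<n. integrable M (\<lambda>\<omega>. Cf (Z i \<omega>)) \<and>
          sub_exponential M (\<lambda>\<omega>. Cf (Z i \<omega>) - integral\<^sup>L M (\<lambda>\<omega>'. Cf (Z i \<omega>'))) \<and>
          psi1_norm M (\<lambda>\<omega>. Cf (Z i \<omega>) - integral\<^sup>L M (\<lambda>\<omega>'. Cf (Z i \<omega>'))) \<le> \<sigma>L \<and>
          integral\<^sup>L M (\<lambda>\<omega>. \<bar>Cf (Z i \<omega>)\<bar>) \<le> C\<mu>"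
    and L_lipschitz: "\<forall>z\<in>W. \<forall>\<beta>1\<in>Rp p. \<forall>\<beta>2\<in>Rp p.
          \<bar>L \<beta>1 z - L \<beta>2 z\<bar> \<le> Cf z * enorm p (\<lambda>k. \<beta>1 k - \<beta>2 k)"
    and \<epsilon>_pos: "0 < \<epsilon>" and \<epsilon>_le_1: "\<epsilon> \<le> 1"
    and \<beta>hat_bounded: "\<forall>\<omega>\<in>space M. \<beta>hat \<omega> \<in> Rp p \<and> supnorm p (\<beta>hat \<omega>) \<le> R"
    and \<beta>hat_measurable: "\<forall>j<p. (\<lambda>\<omega>. \<beta>hat \<omega> j) \<in> borel_measurable M"
    and \<beta>hat_S3ONC: "AE \<omega> in M. S3ONC p lam a UL (\<lambda>b. Ln n L Z b \<omega>) (\<beta>hat \<omega>)"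
    and \<beta>hat_objective: "AE \<omega> in M. Lnlam p n lam a L Z (\<beta>hat \<omega>) \<omega> \<le> Lnlam p n lam a L Z \<beta>eps \<omega> + \<Gamma>"
    and pu_gt: "pu > nnz p \<beta>eps"
    and pu_condition: "\<forall>ph::nat. pu \<le> ph \<and> ph \<le> p \<longrightarrow>
          (real ph - real (nnz p \<beta>eps)) * Ppen lam a (a * lam) >
            4 * \<sigma> / (c * real n) * ln (3 * (\<sigma>L + C\<mu>) * real p * exp 1 * R / \<epsilon>) * real ph
            + 2 * \<sigma> / sqrt (real n) * sqrt (2 * real ph / c * ln (3 * (\<sigma>L + C\<mu>) * real p * exp 1 * R / \<epsilon>))
            + \<Gamma> + 2 * \<epsilon> + epshat"
begin

definition zeta :: real where
  "zeta = ln (3 * (\<sigma>L + C\<mu>) * real p * exp 1 * R / \<epsilon>)"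

lemma scale_ratio_ge_2: "2 \<le> (\<sigma>L + C\<mu>) * R / \<epsilon>"
proof -
  have "2 * 1 \<le> (\<sigma>L + C\<mu>) * (R / \<epsilon>)"
    using \<sigma>L_ge_1 C\<mu>_ge_1 R_ge_1 \<epsilon>_pos \<epsilon>_le_1 by (intro mult_mono) (auto simp: field_simps)
  then show ?thesis by simp
qed

lemma exp_zeta: "exp zeta = 3 * exp 1 * real p * ((\<sigma>L + C\<mu>) * R / \<epsilon>)"
  and exp_zeta_ge_12: "12 \<le> exp zeta"
proof -
  have "2 \<le> exp (1::real)" using exp_ge_add_one_self[of 1] by simp
  then have "3 * 2 * 1 * 2 \<le> 3 * exp 1 * real p * ((\<sigma>L + C\<mu>) * R / \<epsilon>)"
    using p_gt_2 scale_ratio_ge_2 by (intro mult_mono) auto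
  moreover from this have "exp zeta = 3 * exp 1 * real p * ((\<sigma>L + C\<mu>) * R / \<epsilon>)"
    unfolding zeta_def by (simp add: mult_ac)
  ultimately show "exp zeta = 3 * exp 1 * real p * ((\<sigma>L + C\<mu>) * R / \<epsilon>)" "12 \<le> exp zeta"
    by simp_all
qed

lemma zeta_pos: "0 < zeta"
proof -
  have "1 < exp zeta" using exp_zeta_ge_12 by linarith
  then show ?thesis by simp
qed

definition mesh :: "nat \<Rightarrow> real" where
  "mesh k = \<epsilon> / ((C\<mu> + \<sigma>L) * sqrt (real k))"

definition level :: "nat \<Rightarrow> real" where
  "level k = 2 * real k * zeta / c"

definition dev :: "nat \<Rightarrow> real" where
  "dev k = \<sigma> * (sqrt (1 / real n) * sqrt (level k) + (1 / real n) * level k)"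

definition net_points :: "nat \<Rightarrow> (nat \<Rightarrow> real) set" where
  "net_points k = insert \<beta>eps (sparse_net p k R (mesh k))"

text \<open>Bernstein's inequality at \<open>t = n / 4\<close>: off this event the mean of \<open>Cf (Z i)\<close> is at most
  \<open>C\<mu> + 3/4 \<sigma>L\<close>, at the price of the term \<open>exp (- c n / 4)\<close> in the final bound.\<close>
definition Cf_bad :: "'a set" where
  "Cf_bad = {\<omega>\<in>space M. \<bar>centered_mean M n Z Cf \<omega>\<bar>
              > \<sigma>L * (sqrt (1 / real n) * sqrt (real n / 4) + (1 / real n) * (real n / 4))}"

definition L_bad :: "nat \<Rightarrow> (nat \<Rightarrow> real) \<Rightarrow> 'a set" where
  "L_bad k \<beta> = {\<omega>\<in>space M. \<bar>centered_mean M n Z (L \<beta>) \<omega>\<bar> > dev k}"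

definition bad :: "'a set" where
  "bad = Cf_bad \<union> (\<Union>k\<in>{pu..p}. \<Union>\<beta>\<in>net_points k. L_bad k \<beta>)"

lemma net_points_subset_Rp: "net_points k \<subseteq> Rp p"
  unfolding net_points_def using \<beta>eps_Rp sparse_net_subset_Rp by auto

lemma finite_net_points: "finite (net_points k)"
  unfolding net_points_def by (simp add: finite_sparse_net)

lemma card_net_points:
  assumes k: "2 \<le> k"
  shows "real (card (net_points k)) \<le> exp (real k * zeta) / 2"
proof -
  define Q where "Q = exp zeta"
  have Q: "12 \<le> Q" unfolding Q_def by (rule exp_zeta_ge_12)
  have insert: "real (card (net_points k)) \<le> real (card (sparse_net p k R (mesh k))) + 1"
    unfolding net_points_def by (simp add: card_insert_if finite_sparse_net)
  have "R / mesh k = (\<sigma>L + C\<mu>) * R / \<epsilon> * sqrt (real k)"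
    unfolding mesh_def using k \<epsilon>_pos by (simp add: field_simps)
  then have "real (card (sparse_net p k R (mesh k))) \<le> (2 * exp 1 * real p * ((\<sigma>L + C\<mu>) * R / \<epsilon>)) ^ k"
    using k scale_ratio_ge_2 by (intro card_sparse_net_le_exp) auto
  also have "2 * exp 1 * real p * ((\<sigma>L + C\<mu>) * R / \<epsilon>) = 2/3 * Q"
    unfolding Q_def exp_zeta by simp
  also have "(2/3 * Q) ^ k = (2/3) ^ k * Q ^ k"
    by (rule power_mult_distrib)
  also have "\<dots> \<le> 4/9 * Q ^ k"
    using power_decreasing[of 2 k "2/3 :: real"] k Q by (intro mult_right_mono) (auto simp: power2_eq_square)
  finally have "real (card (sparse_net p k R (mesh k))) \<le> 4/9 * Q ^ k" .
  with insert have "real (card (net_points k)) \<le> 4/9 * Q ^ k + 1" by simp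
  moreover have "(12::real) ^ 2 \<le> Q ^ 2"
    using Q by (intro power_mono) auto
  moreover have "Q ^ 2 \<le> Q ^ k"
    using Q k by (intro power_increasing) auto
  moreover have "Q ^ k = exp (real k * zeta)"
    unfolding Q_def by (simp add: exp_of_nat_mult)
  ultimately show ?thesis by simp
qed

lemma L_bad_measure:
  assumes "\<beta> \<in> Rp p" "0 < n"
  shows "L_bad k \<beta> \<in> sets M" "measure M (L_bad k \<beta>) \<le> 2 * exp (- c * level k)"
proof -
  have "L \<beta> \<in> borel_measurable borel" using L_measurable assms(1) by blast
  then have [measurable]: "centered_mean M n Z (L \<beta>) \<in> borel_measurable M"
    using Z_measurable by (intro borel_measurable_centered_mean)
  show "L_bad k \<beta> \<in> sets M"
    unfolding L_bad_def by measurable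
  have "0 \<le> level k" unfolding level_def using zeta_pos c_pos by simp
  then show "measure M (L_bad k \<beta>) \<le> 2 * exp (- c * level k)"
    unfolding L_bad_def dev_def using assms L_measurable L_subexp
    by (intro bernstein_centered_mean[OF prob_space_axioms bernstein Z_measurable Z_indep]) auto
qed

lemma Cf_bad_measure:
  assumes "0 < n"
  shows "Cf_bad \<in> sets M" "measure M Cf_bad \<le> 2 * exp (- (c / 4) * real n)"
proof -
  have [measurable]: "centered_mean M n Z Cf \<in> borel_measurable M"
    using Z_measurable Cf_measurable by (intro borel_measurable_centered_mean)
  show "Cf_bad \<in> sets M"
    unfolding Cf_bad_def by measurable
  show "measure M Cf_bad \<le> 2 * exp (- (c / 4) * real n)"
    unfolding Cf_bad_def using assms Cf_subexp
    by (intro bernstein_centered_mean[OF prob_space_axioms bernstein Z_measurable Z_indep Cf_measurable,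
          THEN order_trans]) auto
qed

lemma bad_in_sets: "0 < n \<Longrightarrow> bad \<in> sets M"
  unfolding bad_def using Cf_bad_measure L_bad_measure net_points_subset_Rp[THEN subsetD] finite_net_points
  by (intro sets.Un sets.finite_UN) auto

lemma measure_L_bad_level:
  assumes "0 < n" "2 \<le> k"
  shows "measure M (\<Union>\<beta>\<in>net_points k. L_bad k \<beta>) \<le> exp (- zeta) ^ k"
proof -
  have "measure M (\<Union>\<beta>\<in>net_points k. L_bad k \<beta>) \<le> (\<Sum>\<beta>\<in>net_points k. measure M (L_bad k \<beta>))"
    using assms L_bad_measure net_points_subset_Rp[THEN subsetD] finite_net_points by (intro measure_UNION_le) auto
  also have "\<dots> \<le> real (card (net_points k)) * (2 * exp (- c * level k))"
    using assms L_bad_measure net_points_subset_Rp[THEN subsetD] by (intro sum_bounded_above) auto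
  also have "\<dots> \<le> exp (real k * zeta) / 2 * (2 * exp (- c * level k))"
    using card_net_points assms by (intro mult_right_mono) auto
  also have "\<dots> = exp (real k * (- zeta))"
    unfolding level_def using c_pos by (simp add: exp_add[symmetric])
  also have "\<dots> = exp (- zeta) ^ k"
    by (rule exp_of_nat_mult)
  finally show ?thesis .
qed

lemma measure_bad:
  assumes "0 < n"
  shows "measure M bad \<le> 2 * exp (- (c / 4) * real n) + 2 * exp (- real pu * zeta)"
proof -
  have BL: "(\<Union>\<beta>\<in>net_points k. L_bad k \<beta>) \<in> sets M" for k
    using assms L_bad_measure net_points_subset_Rp[THEN subsetD] finite_net_points by (intro sets.finite_UN) auto
  have "measure M (\<Union>k\<in>{pu..p}. \<Union>\<beta>\<in>net_points k. L_bad k \<beta>)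
      \<le> (\<Sum>k\<in>{pu..p}. measure M (\<Union>\<beta>\<in>net_points k. L_bad k \<beta>))"
    using BL by (intro measure_UNION_le) auto
  also have "\<dots> \<le> (\<Sum>k=pu..p. exp (- zeta) ^ k)"
    using assms pu_gt \<beta>eps_nonzero by (intro sum_mono measure_L_bad_level) auto
  also have "\<dots> \<le> 2 * exp (- zeta) ^ pu"
  proof (rule sum_power_le_twice_first)
    have "exp (- zeta) = 1 / exp zeta" by (simp add: exp_minus field_simps)
    then show "exp (- zeta) \<le> 1/2" using exp_zeta_ge_12 by simp
  qed simp
  also have "exp (- zeta) ^ pu = exp (- real pu * zeta)"
    by (simp add: exp_of_nat_mult[symmetric])
  finally show ?thesis
    unfolding bad_def using Cf_bad_measure[OF assms] BL
    by (intro measure_Un_le[THEN order_trans]) (auto intro: sets.finite_UN)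
qed

lemma mean_Cf_bounds:
  assumes n: "0 < n" and \<omega>: "\<omega> \<in> space M - Cf_bad" and W: "\<forall>i<n. Z i \<omega> \<in> W"
  shows "0 \<le> (\<Sum>i<n. (1 / real n) * Cf (Z i \<omega>))" "(\<Sum>i<n. (1 / real n) * Cf (Z i \<omega>)) \<le> C\<mu> + \<sigma>L"
proof -
  show "0 \<le> (\<Sum>i<n. (1 / real n) * Cf (Z i \<omega>))"
    using W Cf_nonneg by (intro sum_nonneg) auto
  have "sqrt (1 / real n) * sqrt (real n / 4) = sqrt (1/4)"
    using n by (simp add: real_sqrt_mult[symmetric])
  also have "sqrt (1/4) = (1/2 :: real)"
    by (rule real_sqrt_unique) (auto simp: power2_eq_square)
  finally have half: "sqrt (1 / real n) * sqrt (real n / 4) = 1/2" .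
  have "\<bar>centered_mean M n Z Cf \<omega>\<bar> \<le> \<sigma>L * (1/2 + (1 / real n) * (real n / 4))"
    using \<omega> unfolding Cf_bad_def half by auto
  then have "centered_mean M n Z Cf \<omega> \<le> \<sigma>L * (3/4)"
    using n by (simp add: abs_le_iff)
  moreover have "(\<Sum>i<n. (1 / real n) * (\<integral>\<omega>'. Cf (Z i \<omega>') \<partial>M)) \<le> (\<Sum>i<n. (1 / real n) * C\<mu>)"
  proof (rule sum_mono)
    fix i assume "i \<in> {..<n}"
    then have "(\<integral>\<omega>'. \<bar>Cf (Z i \<omega>')\<bar> \<partial>M) \<le> C\<mu>"
      using Cf_subexp by auto
    then have "(\<integral>\<omega>'. Cf (Z i \<omega>') \<partial>M) \<le> C\<mu>"
      using integral_abs_bound[of M "\<lambda>\<omega>'. Cf (Z i \<omega>')"] abs_le_D1 order_trans by blast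
    then show "(1 / real n) * (\<integral>\<omega>'. Cf (Z i \<omega>') \<partial>M) \<le> (1 / real n) * C\<mu>"
      by (intro mult_left_mono) auto
  qed
  moreover have "(\<Sum>i<n. (1 / real n) * Cf (Z i \<omega>))
      = centered_mean M n Z Cf \<omega> + (\<Sum>i<n. (1 / real n) * (\<integral>\<omega>'. Cf (Z i \<omega>') \<partial>M))"
    unfolding centered_mean_def by (simp add: sum_subtractf right_diff_distrib)
  ultimately show "(\<Sum>i<n. (1 / real n) * Cf (Z i \<omega>)) \<le> C\<mu> + \<sigma>L"
    using n \<sigma>L_ge_1 by simp
qed

lemma Ln_near_popL:
  assumes "\<omega> \<in> space M - L_bad k \<beta>" "\<beta> \<in> Rp p"
  shows "\<bar>Ln n L Z \<beta> \<omega> - popL M n L Z \<beta>\<bar> \<le> dev k"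
  using assms L_subexp Ln_minus_popL[OF prob_space_axioms, of n L \<beta> Z \<omega>] unfolding L_bad_def by auto

lemma twice_dev:
  assumes "0 < n"
  shows "4 * \<sigma> / (c * real n) * zeta * real k + 2 * \<sigma> / sqrt (real n) * sqrt (2 * real k / c * zeta)
           = 2 * dev k"
  unfolding dev_def level_def using assms c_pos by (simp add: real_sqrt_divide field_simps)

text \<open>Off the bad event, an estimator with \<open>k \<ge> pu\<close> nonzeros is within \<open>\<epsilon>\<close> of a net point of
  sparsity \<open>k\<close>, at which the empirical and population losses agree up to \<open>dev k\<close>; the penalty
  gap \<open>(k - s) * Ppen lam a (a * lam)\<close> would then contradict the choice of \<open>pu\<close>.\<close>
lemma nnz_less_off_bad:
  assumes n: "0 < n" and \<omega>: "\<omega> \<in> space M - bad" and W: "\<forall>i<n. Z i \<omega> \<in> W"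
    and S3: "S3ONC p lam a UL (\<lambda>b. Ln n L Z b \<omega>) (\<beta>hat \<omega>)"
    and obj: "Lnlam p n lam a L Z (\<beta>hat \<omega>) \<omega> \<le> Lnlam p n lam a L Z \<beta>eps \<omega> + \<Gamma>"
  shows "nnz p (\<beta>hat \<omega>) < pu"
proof (rule ccontr)
  define b where "b = \<beta>hat \<omega>"
  define k where "k = nnz p b"
  define P0 where "P0 = Ppen lam a (a * lam)"
  assume "\<not> nnz p (\<beta>hat \<omega>) < pu"
  then have k: "k \<in> {pu..p}" "2 \<le> k"
    using nnz_le[of p b] pu_gt \<beta>eps_nonzero unfolding k_def b_def by auto
  have b: "b \<in> Rp p" "supnorm p b \<le> R" using \<beta>hat_bounded \<omega> unfolding b_def by auto
  have "0 < mesh k" unfolding mesh_def using k \<epsilon>_pos \<sigma>L_ge_1 C\<mu>_ge_1 by simp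
  from sparse_net_approx[OF this b] obtain b' where
    b': "b' \<in> sparse_net p k R (mesh k)" "enorm p (\<lambda>j. b j - b' j) \<le> sqrt (real k) * mesh k"
    unfolding k_def by blast
  have b'_Rp: "b' \<in> Rp p" using b'(1) sparse_net_subset_Rp by blast
  have "\<bar>Ln n L Z b \<omega> - Ln n L Z b' \<omega>\<bar>
      \<le> (\<Sum>i<n. (1 / real n) * Cf (Z i \<omega>)) * enorm p (\<lambda>j. b j - b' j)"
    by (intro Ln_lipschitz[OF L_lipschitz] W b(1) b'_Rp)
  also have "\<dots> \<le> (C\<mu> + \<sigma>L) * (sqrt (real k) * mesh k)"
    using \<omega> b'(2) mean_Cf_bounds[OF n _ W] unfolding bad_def
    by (intro mult_mono) (auto simp: enorm_def sum_nonneg)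
  also have "\<dots> = \<epsilon>"
    unfolding mesh_def using k \<sigma>L_ge_1 C\<mu>_ge_1 by simp
  finally have approx: "\<bar>Ln n L Z b \<omega> - Ln n L Z b' \<omega>\<bar> \<le> \<epsilon>" .
  have "b' \<in> net_points k" "\<beta>eps \<in> net_points k"
    using b'(1) unfolding net_points_def by auto
  then have conc: "\<bar>Ln n L Z b' \<omega> - popL M n L Z b'\<bar> \<le> dev k"
      "\<bar>Ln n L Z \<beta>eps \<omega> - popL M n L Z \<beta>eps\<bar> \<le> dev k"
    using \<omega> k b'_Rp \<beta>eps_Rp unfolding bad_def by (auto intro!: Ln_near_popL)
  have gap: "Ln n L Z b \<omega> + real k * P0 \<le> Ln n L Z \<beta>eps \<omega> + real (nnz p \<beta>eps) * P0 + \<Gamma>"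
    using Ln_penalty_gap_S3ONC[OF S3 obj] a_pos lam_pos a_UL UL_ge_1 unfolding k_def b_def P0_def by simp
  have "popL M n L Z \<beta>eps - epshat \<le> popL M n L Z b'"
    using \<beta>star_min b'_Rp \<beta>eps_excess by fastforce
  with approx conc gap have "(real k - real (nnz p \<beta>eps)) * P0 \<le> 2 * dev k + \<epsilon> + epshat + \<Gamma>"
    unfolding left_diff_distrib by linarith
  moreover have "(real k - real (nnz p \<beta>eps)) * P0 > 2 * dev k + \<Gamma> + 2 * \<epsilon> + epshat"
    using pu_condition k n unfolding twice_dev[OF n, symmetric] zeta_def P0_def by auto
  ultimately show False using \<epsilon>_pos by linarith
qed

theorem sparsity_bound:
  "measure M {\<omega>\<in>space M. real (nnz p (\<beta>hat \<omega>)) \<le> real pu - 1}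
     \<ge> 1 - 2 * real p * exp (- (c / 4) * real n) - 4 * exp (- real pu * zeta)"
proof (cases "n = 0")
  case True
  have "1 - 2 * real p * exp (- (c / 4) * real n) - 4 * exp (- real pu * zeta) \<le> 1 - 2 * real p"
    using True by simp
  also have "\<dots> \<le> 0" using p_gt_2 by simp
  finally show ?thesis by (meson measure_nonneg order_trans)
next
  case False
  then have n: "0 < n" by simp
  let ?G = "{\<omega>\<in>space M. real (nnz p (\<beta>hat \<omega>)) \<le> real pu - 1}"
  have [measurable]: "(\<lambda>\<omega>. real (nnz p (\<beta>hat \<omega>))) \<in> borel_measurable M"
    using \<beta>hat_measurable by (intro borel_measurable_nnz) auto
  have "AE \<omega> in M. \<forall>i\<in>{..<n}. Z i \<omega> \<in> W"
    using Z_in_W by (intro eventually_ball_finite) auto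
  with \<beta>hat_S3ONC \<beta>hat_objective have "AE \<omega> in M. \<omega> \<in> space M - bad \<longrightarrow> \<omega> \<in> ?G"
    by eventually_elim (use nnz_less_off_bad[OF n] in fastforce)
  then have "measure M (space M - bad) \<le> measure M ?G"
    by (rule finite_measure_mono_AE) measurable
  moreover have "measure M (space M - bad) = 1 - measure M bad"
    using prob_compl[OF bad_in_sets[OF n]] by simp
  moreover have "2 * exp (- (c / 4) * real n) \<le> 2 * real p * exp (- (c / 4) * real n)"
    using p_gt_2 by simp
  ultimately show ?thesis
    using measure_bad[OF n] exp_ge_zero[of "- real pu * zeta"] by linarith
qed

end

theorem mainTheorem9:
  fixes c :: real
  assumes c_pos: "0 < c" and c_le: "c \<le> 1/2"
  shows "\<exists>ct>0. \<forall>(M::'a measure) (Z::nat \<Rightarrow> 'a \<Rightarrow> real^'q) (W::(real^'q) set)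
            (L::(nat \<Rightarrow> real) \<Rightarrow> real^'q \<Rightarrow> real) (Cf::real^'q \<Rightarrow> real)
            (n::nat) (p::nat) (\<sigma>::real) (\<sigma>L::real) (C\<mu>::real) (R::real) (UL::real)
            (a::real) (lam::real) (\<beta>star::nat \<Rightarrow> real) (\<beta>eps::nat \<Rightarrow> real) (epshat::real)
            (\<Gamma>::real) (\<epsilon>::real) (\<beta>hat::'a \<Rightarrow> nat \<Rightarrow> real) (pu::nat).
    let s = nnz p \<beta>eps;
        \<zeta>1 = ln (3 * (\<sigma>L + C\<mu>) * real p * exp 1 * R / \<epsilon>)
    in
    ( \<comment> \<open>probability space, i.i.d. samples with support in W\<close>
      prob_space M \<and> bernstein_constant M c \<and>
      (\<forall>i<n. Z i \<in> borel_measurable M) \<and>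
      prob_space.indep_vars M (\<lambda>_. borel) Z {..<n} \<and>
      (\<forall>i<n. distr M borel (Z i) = distr M borel (Z 0)) \<and>
      W \<in> sets borel \<and> (\<forall>i<n. AE \<omega> in M. Z i \<omega> \<in> W) \<and>
      \<comment> \<open>dimension and loss\<close>
      2 < p \<and>
      (\<forall>\<beta>\<in>Rp p. L \<beta> \<in> borel_measurable borel) \<and>
      \<comment> \<open>beta* minimizes the population loss\<close>
      R \<ge> 1 \<and> \<beta>star \<in> Rp p \<and> supnorm p \<beta>star \<le> R \<and>
      (\<forall>\<beta>\<in>Rp p. popL M n L Z \<beta>star \<le> popL M n L Z \<beta>) \<and>
      \<comment> \<open>smoothness\<close>
      UL \<ge> 1 \<and> (\<forall>i<n. AE \<omega> in M. smooth_coord_lipschitz p UL (\<lambda>b. L b (Z i \<omega>))) \<and>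
      \<comment> \<open>penalty parameters\<close>
      0 < a \<and> 0 < lam \<and> a < 1 / UL \<and>
      \<comment> \<open>(A1)\<close>
      \<beta>eps \<in> Rp p \<and> supnorm p \<beta>eps \<le> R \<and> s \<ge> 1 \<and> epshat \<ge> 0 \<and>
      popL M n L Z \<beta>eps - popL M n L Z \<beta>star \<le> epshat \<and>
      \<comment> \<open>(A2)\<close>
      \<sigma> \<ge> 1 \<and>
      (\<forall>\<beta>\<in>Rp p. \<forall>i<n. integrable M (\<lambda>\<omega>. L \<beta> (Z i \<omega>)) \<and>
          sub_exponential M (\<lambda>\<omega>. L \<beta> (Z i \<omega>) - integral\<^sup>L M (\<lambda>\<omega>'. L \<beta> (Z i \<omega>'))) \<and>
          psi1_norm M (\<lambda>\<omega>. L \<beta> (Z i \<omega>) - integral\<^sup>L M (\<lambda>\<omega>'. L \<beta> (Z i \<omega>'))) \<le> \<sigma>) \<and>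
      \<comment> \<open>(A3)\<close>
      \<sigma>L \<ge> 1 \<and> C\<mu> \<ge> 1 \<and> Cf \<in> borel_measurable borel \<and> (\<forall>z\<in>W. 0 \<le> Cf z) \<and>
      (\<forall>i<n. integrable M (\<lambda>\<omega>. Cf (Z i \<omega>)) \<and>
          sub_exponential M (\<lambda>\<omega>. Cf (Z i \<omega>) - integral\<^sup>L M (\<lambda>\<omega>'. Cf (Z i \<omega>'))) \<and>
          psi1_norm M (\<lambda>\<omega>. Cf (Z i \<omega>) - integral\<^sup>L M (\<lambda>\<omega>'. Cf (Z i \<omega>'))) \<le> \<sigma>L \<and>
          integral\<^sup>L M (\<lambda>\<omega>. \<bar>Cf (Z i \<omega>)\<bar>) \<le> C\<mu>) \<and>
      (\<forall>z\<in>W. \<forall>\<beta>1\<in>Rp p. \<forall>\<beta>2\<in>Rp p.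
          \<bar>L \<beta>1 z - L \<beta>2 z\<bar> \<le> Cf z * enorm p (\<lambda>k. \<beta>1 k - \<beta>2 k)) \<and>
      \<comment> \<open>parameters Gamma, epsilon\<close>
      \<Gamma> \<ge> 0 \<and> 0 < \<epsilon> \<and> \<epsilon> \<le> 1 \<and>
      \<comment> \<open>the estimator\<close>
      (\<forall>\<omega>\<in>space M. \<beta>hat \<omega> \<in> Rp p \<and> supnorm p (\<beta>hat \<omega>) \<le> R) \<and>
      (\<forall>j<p. (\<lambda>\<omega>. \<beta>hat \<omega> j) \<in> borel_measurable M) \<and>
      (AE \<omega> in M. S3ONC p lam a UL (\<lambda>b. Ln n L Z b \<omega>) (\<beta>hat \<omega>)) \<and>
      (AE \<omega> in M. Lnlam p n lam a L Z (\<beta>hat \<omega>) \<omega> \<le> Lnlam p n lam a L Z \<beta>eps \<omega> + \<Gamma>) \<and>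
      \<comment> \<open>the integer pu\<close>
      pu > s \<and>
      (\<forall>ph::nat. pu \<le> ph \<and> ph \<le> p \<longrightarrow>
          (real ph - real s) * Ppen lam a (a * lam) >
            4 * \<sigma> / (c * real n) * \<zeta>1 * real ph
            + 2 * \<sigma> / sqrt (real n) * sqrt (2 * real ph / c * \<zeta>1)
            + \<Gamma> + 2 * \<epsilon> + epshat)
    \<longrightarrow>
      measure M {\<omega>\<in>space M. real (nnz p (\<beta>hat \<omega>)) \<le> real pu - 1}
        \<ge> 1 - 2 * real p * exp (- ct * real n) - 4 * exp (- real pu * \<zeta>1))"
  unfolding Let_def
proof (intro exI[of _ "c / 4"] conjI allI impI, goal_cases)
  case 1
  show ?case using c_pos by simp
next
  case (2 M Z W L Cf n p \<sigma> \<sigma>L C\<mu> R UL a lam \<beta>star \<beta>eps epshat \<Gamma> \<epsilon> \<beta>hat pu)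
  then interpret sparse_recovery M Z W L Cf n p \<sigma> \<sigma>L C\<mu> R UL a lam \<beta>star \<beta>eps epshat \<Gamma> \<epsilon> \<beta>hat pu c
    using c_pos by (simp add: sparse_recovery_def sparse_recovery_axioms_def)
  show ?case using sparsity_bound unfolding zeta_def .
qed

end
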